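(* Suppose $c_0/n\leq p\leq\ln(n)^7/n$ for a sufficiently large constant $c_0>0$. Then with probability $1-o(1)$ as $n\to\infty$ the random graph $G=G(n,p)$ on vertex set $V$ has no set $U\subset V$ with $|U|\leq1/p$ and $\chi(G[U])>\sqrt{np}$.
   Context: $G(n,p)$ is the random graph on $V=\{1,\dots,n\}$ with each possible edge present independently with probability $p$; $G[U]$ is the induced subgraph on $U$ and $\chi$ is the chromatic number. *)

theory Defs
  imports Complex_Main
begin

definition all_edges :: "nat \<Rightarrow> nat set set" where
  "all_edges n = {e. \<exists>i j. i \<in> {1..n} \<and> j \<in> {1..n} \<and> i \<noteq> j \<and> e = {i, j}}"

text \<open>Probability in G(n,p) of the graph property P (a graph is its edge set E):
  each possible edge present independently with probability p.\<close>
definition gnp_prob :: "nat \<Rightarrow> real \<Rightarrow> (nat set set \<Rightarrow> bool) \<Rightarrow> real" where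
  "gnp_prob n p P =
     (\<Sum>E\<in>{E. E \<subseteq> all_edges n \<and> P E}.
        p ^ card E * (1 - p) ^ (card (all_edges n) - card E))"

definition proper_colouring :: "nat set set \<Rightarrow> nat set \<Rightarrow> nat \<Rightarrow> (nat \<Rightarrow> nat) \<Rightarrow> bool" where
  "proper_colouring E U k f \<longleftrightarrow>
     f ` U \<subseteq> {..<k} \<and> (\<forall>u\<in>U. \<forall>v\<in>U. {u, v} \<in> E \<longrightarrow> f u \<noteq> f v)"

definition chromatic_number :: "nat set set \<Rightarrow> nat set \<Rightarrow> nat" where
  "chromatic_number E U = (LEAST k. \<exists>f. proper_colouring E U k f)"

end

theory Submission
  imports Defs "HOL-Real_Asymp.Real_Asymp"
begin

text \<open>If \<chi>(G[U]) > 2h then greedy colouring of G[U] fails, so some nonempty W \<subseteq> U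
  has minimum degree at least 2h in G[W] and hence carries a set of h|W| edges. For
  |W| = w \<le> 1/p the expected number of such pairs (W, F) is at most
  C(n,w) C(C(w,2),wh) p^(wh) \<le> p/2^w once np \<le> (2h+2)^2 with h large. Taking
  h = \<lfloor>sqrt(np)/2\<rfloor>, the union bound over w gives probability at most p, which tends to 0.\<close>

lemma power_div_fact_le_exp:
  fixes x :: real
  assumes "0 \<le> x"
  shows "x ^ m / fact m \<le> exp x"
proof -
  have "(\<Sum>k\<in>{m}. x ^ k /\<^sub>R fact k) \<le> (\<Sum>k. x ^ k /\<^sub>R fact k)"
    by (rule sum_le_suminf) (use assms summable_exp in auto)
  also have "\<dots> = exp x"
    using exp_converges sums_unique by metis
  finally show ?thesis
    by (simp add: divide_inverse mult.commute)
qed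

lemma power_self_div_fact_le: "real m ^ m / fact m \<le> 3 ^ m"
proof -
  have "real m ^ m / fact m \<le> exp (real m)"
    by (rule power_div_fact_le_exp) simp
  also have "\<dots> = exp 1 ^ m"
    by (simp add: exp_of_nat_mult[symmetric])
  also have "\<dots> \<le> 3 ^ m"
    by (rule power_mono) (use exp_le in auto)
  finally show ?thesis .
qed

lemma binomial_mult_power_le:
  fixes p :: real
  assumes "0 \<le> p" "1 \<le> m"
  shows "real (N choose m) * p ^ m \<le> (3 * real N * p / real m) ^ m"
proof -
  have "real (N choose m) * fact m \<le> real N ^ m"
    by (metis binomial_fact_pow of_nat_fact of_nat_le_iff of_nat_mult of_nat_power)
  then have "real (N choose m) * p ^ m \<le> real N ^ m / fact m * p ^ m"
    using assms by (intro mult_right_mono) (auto simp: field_simps)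
  also have "\<dots> = (3 * real N * p / real m) ^ m * (real m ^ m / fact m / 3 ^ m)"
    using assms by (simp add: power_divide power_mult_distrib field_simps)
  also have "\<dots> \<le> (3 * real N * p / real m) ^ m"
  proof (rule mult_left_le)
    show "real m ^ m / fact m / 3 ^ m \<le> 1"
      using power_self_div_fact_le[of m] by (simp add: divide_le_eq mult.commute)
  qed (use assms in simp)
  finally show ?thesis .
qed

lemma choose_two_le: "real (w choose 2) \<le> real w ^ 2 / 2"
proof -
  have "real (w choose 2) \<le> real (w * (w - 1)) / 2"
    using of_nat_div_le_of_nat[of "w * (w - 1)" 2, where ?'a = real] by (simp add: choose_two)
  also have "\<dots> \<le> real w ^ 2 / 2"
    by (simp add: power2_eq_square mult_left_mono)
  finally show ?thesis .
qed

lemma sum_subsets_by_card: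
  fixes g :: "nat \<Rightarrow> 'b :: comm_semiring_1"
  assumes "finite A"
  shows "(\<Sum>W\<in>{W. W \<subseteq> A \<and> P (card W)}. g (card W))
       = (\<Sum>w\<in>{w. w \<le> card A \<and> P w}. of_nat (card A choose w) * g w)"
proof -
  let ?S = "{W. W \<subseteq> A \<and> P (card W)}"
  have "(\<Sum>W\<in>?S. g (card W))
      = (\<Sum>w\<in>{w. w \<le> card A \<and> P w}. \<Sum>W\<in>{W\<in>?S. card W = w}. g (card W))"
    by (rule sum.group[symmetric]) (use assms in \<open>auto intro: card_mono\<close>)
  also have "\<dots> = (\<Sum>w\<in>{w. w \<le> card A \<and> P w}. of_nat (card A choose w) * g w)"
  proof (rule sum.cong)
    fix w
    assume "w \<in> {w. w \<le> card A \<and> P w}"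
    then have "{W\<in>?S. card W = w} = {W. W \<subseteq> A \<and> card W = w}"
      by auto
    then show "(\<Sum>W\<in>{W\<in>?S. card W = w}. g (card W)) = of_nat (card A choose w) * g w"
      using n_subsets[OF assms, of w] by simp
  qed simp
  finally show ?thesis .
qed

definition degree_in :: "nat set set \<Rightarrow> nat set \<Rightarrow> nat \<Rightarrow> nat" where
  "degree_in E W v = card {u\<in>W. {u, v} \<in> E}"

lemma proper_colouring_if_degenerate:
  assumes "finite U" and "\<forall>x. {x} \<notin> E"
    and "\<And>W. W \<subseteq> U \<Longrightarrow> W \<noteq> {} \<Longrightarrow> \<exists>v\<in>W. degree_in E W v < k"
  shows "\<exists>f. proper_colouring E U k f"
  using assms(1,3)
proof (induction U rule: finite_remove_induct)
  case empty
  then show ?case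
    by (auto simp: proper_colouring_def)
next
  case (remove U)
  obtain v where v: "v \<in> U" "degree_in E U v < k"
    using remove.prems remove.hyps(2) by blast
  obtain f where f: "proper_colouring E (U - {v}) k f"
    using remove.IH[OF v(1)] remove.prems by blast
  define N where "N = {u\<in>U - {v}. {u, v} \<in> E}"
  have "card (f ` N) \<le> card N"
    using remove.hyps(1) by (intro card_image_le) (auto simp: N_def)
  also have "\<dots> \<le> degree_in E U v"
    unfolding degree_in_def N_def using remove.hyps(1) by (intro card_mono) auto
  finally have "card (f ` N) < k"
    using v(2) by linarith
  moreover have "finite (f ` N)"
    using remove.hyps(1) by (simp add: N_def)
  ultimately have "\<not> {..<k} \<subseteq> f ` N"
    using card_mono[of "f ` N" "{..<k}"] by fastforce
  then obtain c where c: "c < k" "c \<notin> f ` N"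
    by blast
  have "proper_colouring E U k (f(v := c))"
    unfolding proper_colouring_def
  proof (intro conjI ballI impI)
    show "(f(v := c)) ` U \<subseteq> {..<k}"
      using f c by (auto simp: proper_colouring_def)
  next
    fix x y
    assume xy: "x \<in> U" "y \<in> U" "{x, y} \<in> E"
    then have "{y, x} \<in> E"
      by (simp add: insert_commute)
    then show "(f(v := c)) x \<noteq> (f(v := c)) y"
      using f c xy assms(2) unfolding proper_colouring_def N_def
      by (cases "x = v"; cases "y = v") auto
  qed
  then show ?case
    by blast
qed

lemma sum_degree_in_le_twice_card_edges:
  assumes W: "finite W" and edges: "\<forall>e\<in>E. card e = 2"
  shows "(\<Sum>v\<in>W. degree_in E W v) \<le> 2 * card {e\<in>E. e \<subseteq> W}"
proof -
  define EW where "EW = {e\<in>E. e \<subseteq> W}"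
  define ends where "ends e = {(v, u). {u, v} = e}" for e :: "nat set"
  have finEW: "finite EW"
    using W by (intro finite_subset[of EW "Pow W"]) (auto simp: EW_def)
  have card_ends: "card (ends e) \<le> 2" if "e \<in> EW" for e
  proof -
    have "card e = 2"
      using that edges by (simp add: EW_def)
    then obtain a b where "a \<noteq> b" "e = {a, b}"
      by (metis card_2_iff)
    then have "ends e = {(a, b), (b, a)}"
      by (auto simp: ends_def doubleton_eq_iff)
    then show ?thesis
      by (simp add: card_insert_le_m1)
  qed
  have "(\<Sum>v\<in>W. degree_in E W v) = card (SIGMA v:W. {u\<in>W. {u, v} \<in> E})"
    using W by (simp add: degree_in_def card_SigmaI)
  also have "\<dots> \<le> card (\<Union>e\<in>EW. ends e)"
  proof (rule card_mono)
    have "(\<Union>e\<in>EW. ends e) \<subseteq> W \<times> W"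
      by (auto simp: ends_def EW_def)
    then show "finite (\<Union>e\<in>EW. ends e)"
      by (rule finite_subset) (use W in simp)
    show "(SIGMA v:W. {u\<in>W. {u, v} \<in> E}) \<subseteq> (\<Union>e\<in>EW. ends e)"
      unfolding EW_def ends_def by blast
  qed
  also have "\<dots> \<le> (\<Sum>e\<in>EW. card (ends e))"
    using finEW by (rule card_UN_le)
  also have "\<dots> \<le> 2 * card EW"
    using sum_mono[of EW "\<lambda>e. card (ends e)" "\<lambda>_. 2"] card_ends by simp
  finally show ?thesis
    by (simp add: EW_def)
qed

lemma chromatic_number_le: "proper_colouring E U k f \<Longrightarrow> chromatic_number E U \<le> k"
  unfolding chromatic_number_def by (rule Least_le) blast

lemma dense_edge_set_if_not_colourable:
  assumes U: "finite U" and edges: "\<forall>e\<in>E. card e = 2"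
    and uncolourable: "\<nexists>f. proper_colouring E U (2 * h) f"
  obtains W F where "W \<subseteq> U" "W \<noteq> {}" "F \<subseteq> E" "F \<subseteq> Pow W" "card F = card W * h"
proof -
  have "\<forall>x. {x} \<notin> E"
    using edges by force
  then obtain W where W: "W \<subseteq> U" "W \<noteq> {}" and deg: "\<forall>v\<in>W. 2 * h \<le> degree_in E W v"
    using proper_colouring_if_degenerate[OF U] uncolourable by (meson not_le)
  have "finite W"
    using W(1) U by (rule finite_subset)
  have "2 * (card W * h) = (\<Sum>v\<in>W. 2 * h)"
    by simp
  also have "\<dots> \<le> (\<Sum>v\<in>W. degree_in E W v)"
    using deg by (intro sum_mono) auto
  also have "\<dots> \<le> 2 * card {e\<in>E. e \<subseteq> W}"
    using \<open>finite W\<close> edges by (rule sum_degree_in_le_twice_card_edges)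
  finally have "card W * h \<le> card {e\<in>E. e \<subseteq> W}"
    by simp
  then obtain F where "F \<subseteq> {e\<in>E. e \<subseteq> W}" "card F = card W * h"
    by (rule obtain_subset_with_card_n)
  then show thesis
    using that W by blast
qed

lemma all_edges_eq: "all_edges n = {e. e \<subseteq> {1..n} \<and> card e = 2}"
  unfolding all_edges_def card_2_iff by blast

lemma finite_all_edges: "finite (all_edges n)"
  by (rule finite_subset[of _ "Pow {1..n}"]) (auto simp: all_edges_eq)

lemma card_edge_sets_within:
  assumes "W \<subseteq> {1..n}"
  shows "card {F. F \<subseteq> all_edges n \<inter> Pow W \<and> card F = k} = (card W choose 2) choose k"
proof -
  have "finite W"
    using assms finite_subset by blast
  have "all_edges n \<inter> Pow W = {e. e \<subseteq> W \<and> card e = 2}"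
    using assms by (auto simp: all_edges_eq)
  then have "card (all_edges n \<inter> Pow W) = card W choose 2"
    using n_subsets[OF \<open>finite W\<close>] by simp
  then show ?thesis
    using n_subsets[of "all_edges n \<inter> Pow W" k] finite_all_edges by simp
qed

lemma gnp_prob_nonneg: "0 \<le> p \<Longrightarrow> p \<le> 1 \<Longrightarrow> 0 \<le> gnp_prob n p P"
  unfolding gnp_prob_def by (intro sum_nonneg) auto

lemma gnp_prob_mono:
  assumes "0 \<le> p" "p \<le> 1" and "\<And>E. E \<subseteq> all_edges n \<Longrightarrow> P E \<Longrightarrow> Q E"
  shows "gnp_prob n p P \<le> gnp_prob n p Q"
  unfolding gnp_prob_def using assms finite_all_edges
  by (intro sum_mono2) (auto intro: finite_subset)

lemma gnp_prob_disj_le: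
  assumes "0 \<le> p" "p \<le> 1"
  shows "gnp_prob n p (\<lambda>E. P E \<or> Q E) \<le> gnp_prob n p P + gnp_prob n p Q"
proof -
  define w where "w E = p ^ card E * (1 - p) ^ (card (all_edges n) - card E)" for E :: "nat set set"
  define SP where "SP = {E. E \<subseteq> all_edges n \<and> P E}"
  define SQ where "SQ = {E. E \<subseteq> all_edges n \<and> Q E}"
  have fin: "finite SP" "finite SQ"
    using finite_all_edges by (auto simp: SP_def SQ_def intro: finite_subset)
  have "gnp_prob n p (\<lambda>E. P E \<or> Q E) = sum w (SP \<union> SQ)"
    unfolding gnp_prob_def w_def SP_def SQ_def by (rule sum.cong) auto
  also have "\<dots> = sum w SP + sum w SQ - sum w (SP \<inter> SQ)"
    using fin by (rule sum_Un)
  also have "\<dots> \<le> sum w SP + sum w SQ"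
    using assms by (simp add: w_def sum_nonneg)
  finally show ?thesis
    by (simp add: gnp_prob_def w_def SP_def SQ_def)
qed

lemma gnp_prob_union_le:
  assumes "0 \<le> p" "p \<le> 1" and "finite I"
  shows "gnp_prob n p (\<lambda>E. \<exists>i\<in>I. Q i E) \<le> (\<Sum>i\<in>I. gnp_prob n p (Q i))"
  using assms(3)
proof (induction I rule: finite_induct)
  case empty
  then show ?case
    by (simp add: gnp_prob_def)
next
  case (insert i I)
  have "gnp_prob n p (\<lambda>E. \<exists>j\<in>insert i I. Q j E)
      \<le> gnp_prob n p (Q i) + gnp_prob n p (\<lambda>E. \<exists>j\<in>I. Q j E)"
    using gnp_prob_disj_le[OF assms(1,2)] by simp
  also have "\<dots> \<le> (\<Sum>j\<in>insert i I. gnp_prob n p (Q j))"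
    using insert by simp
  finally show ?case .
qed

lemma gnp_prob_supset:
  assumes "F \<subseteq> all_edges n"
  shows "gnp_prob n p (\<lambda>E. F \<subseteq> E) = p ^ card F"
proof -
  define A where "A = all_edges n"
  have A: "finite A" "F \<subseteq> A"
    using assms finite_all_edges by (auto simp: A_def)
  define q where "q i = (if i \<in> F then 0 else 1 - p)" for i
  \<comment> \<open>Expanding \<Prod>(p + q i) over subsets X of A yields the G(n,p) weight of X
    if F \<subseteq> X and 0 otherwise; evaluated directly the product is p^|F|.\<close>
  have "(\<Prod>i\<in>A. p + q i) = (\<Sum>X\<in>Pow A. (\<Prod>i\<in>X. p) * (\<Prod>i\<in>A - X. q i))"
    using A(1) by (rule prod_add)
  also have "\<dots> = (\<Sum>X\<in>Pow A. if F \<subseteq> X then p ^ card X * (1 - p) ^ (card A - card X) else 0)"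
  proof (rule sum.cong)
    fix X
    assume X: "X \<in> Pow A"
    show "(\<Prod>i\<in>X. p) * (\<Prod>i\<in>A - X. q i)
        = (if F \<subseteq> X then p ^ card X * (1 - p) ^ (card A - card X) else 0)"
    proof (cases "F \<subseteq> X")
      case True
      then have "(\<Prod>i\<in>A - X. q i) = (\<Prod>i\<in>A - X. 1 - p)"
        by (intro prod.cong) (auto simp: q_def)
      then show ?thesis
        using True X A(1) by (simp add: card_Diff_subset finite_subset)
    next
      case False
      then obtain i where "i \<in> F" "i \<notin> X"
        by blast
      then have "i \<in> A - X" "q i = 0"
        using A(2) by (auto simp: q_def)
      then show ?thesis
        using False A(1) by (auto intro: prod_zero)
    qed
  qed simp
  also have "\<dots> = gnp_prob n p (\<lambda>E. F \<subseteq> E)"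
    unfolding gnp_prob_def A_def[symmetric] using A(1)
    by (simp add: sum.inter_filter[symmetric] Pow_def)
  finally have "gnp_prob n p (\<lambda>E. F \<subseteq> E) = (\<Prod>i\<in>A. p + q i)" ..
  also have "\<dots> = (\<Prod>i\<in>A. if i \<in> F then p else 1)"
    by (intro prod.cong) (auto simp: q_def)
  also have "\<dots> = p ^ card F"
    using A by (simp add: prod.If_cases Int_absorb1)
  finally show ?thesis .
qed

lemma gnp_prob_chromatic_gt_le_first_moment:
  fixes p :: real
  assumes p: "0 \<le> p" "p \<le> 1"
  shows "gnp_prob n p (\<lambda>E. \<exists>U\<subseteq>{1..n}. real (card U) \<le> 1 / p \<and> 2 * h < chromatic_number E U)
    \<le> (\<Sum>w\<in>{w. w \<le> n \<and> 1 \<le> w \<and> real w \<le> 1 / p}.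
          real (n choose w) * (real ((w choose 2) choose (w * h)) * p ^ (w * h)))"
proof -
  define WW where "WW = {W. W \<subseteq> {1..n} \<and> 1 \<le> card W \<and> real (card W) \<le> 1 / p}"
  define S where "S W = {F. F \<subseteq> all_edges n \<inter> Pow W \<and> card F = card W * h}" for W
  have finWW: "finite WW"
    by (rule finite_subset[of _ "Pow {1..n}"]) (auto simp: WW_def)
  have finS: "finite (S W)" for W
    by (rule finite_subset[of _ "Pow (all_edges n)"]) (auto simp: S_def finite_all_edges)
  have "gnp_prob n p (\<lambda>E. \<exists>U\<subseteq>{1..n}. real (card U) \<le> 1 / p \<and> 2 * h < chromatic_number E U)
      \<le> gnp_prob n p (\<lambda>E. \<exists>x\<in>Sigma WW S. snd x \<subseteq> E)"
  proof (rule gnp_prob_mono[OF p])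
    fix E
    assume E: "E \<subseteq> all_edges n"
      and "\<exists>U\<subseteq>{1..n}. real (card U) \<le> 1 / p \<and> 2 * h < chromatic_number E U"
    then obtain U where U: "U \<subseteq> {1..n}" "real (card U) \<le> 1 / p" "2 * h < chromatic_number E U"
      by blast
    have "finite U"
      using U(1) finite_subset by blast
    have uncolourable: "\<nexists>f. proper_colouring E U (2 * h) f"
      using U(3) chromatic_number_le by (meson not_le)
    have edges: "\<forall>e\<in>E. card e = 2"
      using E by (auto simp: all_edges_eq)
    obtain W F
      where W: "W \<subseteq> U" "W \<noteq> {}" and F: "F \<subseteq> E" "F \<subseteq> Pow W" "card F = card W * h"
      by (rule dense_edge_set_if_not_colourable[OF \<open>finite U\<close> edges uncolourable])
    have "finite W"
      using W(1) \<open>finite U\<close> by (rule finite_subset)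
    have "real (card W) \<le> real (card U)"
      using W(1) \<open>finite U\<close> by (simp add: card_mono)
    then have "W \<in> WW"
      using W U(1,2) \<open>finite W\<close> by (simp add: WW_def Suc_le_eq card_gt_0_iff)
    moreover have "F \<in> S W"
      using F E by (auto simp: S_def)
    ultimately show "\<exists>x\<in>Sigma WW S. snd x \<subseteq> E"
      using F(1) by (intro bexI[of _ "(W, F)"]) auto
  qed
  also have "\<dots> \<le> (\<Sum>x\<in>Sigma WW S. gnp_prob n p (\<lambda>E. snd x \<subseteq> E))"
    using finWW finS by (intro gnp_prob_union_le[OF p]) auto
  also have "\<dots> = (\<Sum>W\<in>WW. \<Sum>F\<in>S W. gnp_prob n p (\<lambda>E. F \<subseteq> E))"
    using sum.Sigma[OF finWW, of S "\<lambda>W F. gnp_prob n p (\<lambda>E. F \<subseteq> E)"] finS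
    by (simp add: split_beta)
  also have "\<dots> = (\<Sum>W\<in>WW. \<Sum>F\<in>S W. p ^ (card W * h))"
    by (intro sum.cong refl) (auto simp: S_def gnp_prob_supset)
  also have "\<dots> = (\<Sum>W\<in>WW. real ((card W choose 2) choose (card W * h)) * p ^ (card W * h))"
  proof (intro sum.cong refl)
    fix W
    assume "W \<in> WW"
    then have "card (S W) = (card W choose 2) choose (card W * h)"
      unfolding S_def by (intro card_edge_sets_within) (simp add: WW_def)
    then show "(\<Sum>F\<in>S W. p ^ (card W * h))
        = real ((card W choose 2) choose (card W * h)) * p ^ (card W * h)"
      by simp
  qed
  also have "\<dots> = (\<Sum>w\<in>{w. w \<le> n \<and> 1 \<le> w \<and> real w \<le> 1 / p}.
          real (n choose w) * (real ((w choose 2) choose (w * h)) * p ^ (w * h)))"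
    using sum_subsets_by_card[where A = "{1..n}" and P = "\<lambda>w. 1 \<le> w \<and> real w \<le> 1 / p"]
    by (simp add: WW_def)
  finally show ?thesis .
qed

lemma choose_choose_two_mult_power_le:
  fixes p :: real
  assumes "0 \<le> p" "1 \<le> w" "1 \<le> h"
  shows "real ((w choose 2) choose (w * h)) * p ^ (w * h)
    \<le> ((3 * (real w * p) / (2 * real h)) ^ h) ^ w"
proof -
  have "real ((w choose 2) choose (w * h)) * p ^ (w * h)
      \<le> (3 * real (w choose 2) * p / real (w * h)) ^ (w * h)"
    using binomial_mult_power_le[of p "w * h" "w choose 2"] assms by simp
  also have "\<dots> \<le> (3 * (real w * p) / (2 * real h)) ^ (w * h)"
  proof (rule power_mono)
    have "3 * real (w choose 2) * p / real (w * h) \<le> 3 * (real w ^ 2 / 2) * p / real (w * h)"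
      using choose_two_le[of w] assms by (intro divide_right_mono mult_right_mono) auto
    also have "\<dots> = 3 * (real w * p) / (2 * real h)"
      using assms by (simp add: power2_eq_square field_simps)
    finally show "3 * real (w choose 2) * p / real (w * h) \<le> 3 * (real w * p) / (2 * real h)" .
  qed (use assms in auto)
  finally show ?thesis
    by (simp add: power_mult mult.commute)
qed

lemma expected_count_factor_le:
  assumes "32 \<le> h"
  shows "3 * (2 * real h + 2) ^ 2 * (3 / (2 * real h)) ^ h \<le> 1 / 4"
proof -
  have "(3 / (2 * real h)) ^ h \<le> (3 / (2 * real h)) ^ 4"
    using assms by (intro power_decreasing) auto
  moreover have "(2 * real h + 2) ^ 2 \<le> (4 * real h) ^ 2"
    using assms by (intro power_mono) auto
  ultimately have "3 * (2 * real h + 2) ^ 2 * (3 / (2 * real h)) ^ h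
      \<le> 3 * (4 * real h) ^ 2 * (3 / (2 * real h)) ^ 4"
    by (intro mult_mono) auto
  also have "\<dots> = 243 / real h ^ 2"
    using assms by (simp add: power_divide field_simps)
  also have "\<dots> \<le> 1 / 4"
  proof -
    have "(32 :: real) ^ 2 \<le> real h ^ 2"
      using assms by (intro power_mono) auto
    then show ?thesis
      using assms by (simp add: field_simps)
  qed
  finally show ?thesis .
qed

lemma expected_dense_subgraphs_le:
  fixes p :: real
  assumes p: "0 < p" and w: "1 \<le> w" "real w * p \<le> 1" and h: "32 \<le> h"
    and np: "real n * p \<le> (2 * real h + 2) ^ 2"
  shows "real (n choose w) * (real ((w choose 2) choose (w * h)) * p ^ (w * h)) \<le> p / 2 ^ w"
proof -
  define x where "x = real w * p"
  have x: "0 < x" "x \<le> 1"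
    using p w by (auto simp: x_def)
  have vertex_sets: "real (n choose w) \<le> (3 * real n / real w) ^ w"
    using binomial_mult_power_le[of 1 w n] w by simp
  have edge_sets: "real ((w choose 2) choose (w * h)) * p ^ (w * h)
      \<le> ((3 * x / (2 * real h)) ^ h) ^ w"
    using choose_choose_two_mult_power_le[of p w h] p w h by (simp add: x_def)
  have base: "3 * real n / real w * (3 * x / (2 * real h)) ^ h \<le> x / 4"
  proof -
    \<comment> \<open>One factor x = wp of the edge sets pays for the n/w of the vertex sets.\<close>
    have "x ^ h = x * x ^ (h - 1)"
      using h by (simp add: power_eq_if)
    moreover have "3 * x / (2 * real h) = 3 / (2 * real h) * x"
      by simp
    ultimately have "3 * real n / real w * (3 * x / (2 * real h)) ^ h
        = (3 * real n / real w * x) * (3 / (2 * real h)) ^ h * x ^ (h - 1)"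
      by (simp only: power_mult_distrib mult_ac)
    also have "\<dots> = 3 * (real n * p) * (3 / (2 * real h)) ^ h * x ^ (h - 1)"
      using w by (simp add: x_def)
    also have "\<dots> \<le> 3 * (2 * real h + 2) ^ 2 * (3 / (2 * real h)) ^ h * x ^ (h - 1)"
      using np x by (intro mult_right_mono) auto
    also have "\<dots> \<le> 1 / 4 * x ^ 1"
      using expected_count_factor_le[OF h] x h by (intro mult_mono power_decreasing) auto
    finally show ?thesis
      by simp
  qed
  have "real (n choose w) * (real ((w choose 2) choose (w * h)) * p ^ (w * h))
      \<le> (3 * real n / real w) ^ w * ((3 * x / (2 * real h)) ^ h) ^ w"
    using vertex_sets edge_sets p by (intro mult_mono) auto
  also have "\<dots> = (3 * real n / real w * (3 * x / (2 * real h)) ^ h) ^ w"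
    by (simp only: power_mult_distrib)
  also have "\<dots> \<le> (x / 4) ^ w"
    using base x by (intro power_mono) auto
  also have "\<dots> \<le> x / 4 ^ w"
    using power_decreasing[of 1 w x] x w by (simp add: power_divide divide_right_mono)
  also have "\<dots> \<le> 2 ^ w * p / 4 ^ w"
  proof -
    have "real w \<le> 2 ^ w"
      by (metis less_exp less_imp_le of_nat_le_iff of_nat_numeral of_nat_power)
    then show ?thesis
      using p by (simp add: x_def divide_right_mono mult_right_mono)
  qed
  also have "\<dots> = p / 2 ^ w"
    by (simp add: power_mult_distrib[symmetric] field_simps)
  finally show ?thesis .
qed

lemma gnp_prob_small_set_chromatic_gt_sqrt_le:
  fixes p :: real
  assumes p: "0 < p" "p \<le> 1" and np: "4096 \<le> real n * p"
  shows "gnp_prob n p (\<lambda>E. \<exists>U\<subseteq>{1..n}. real (card U) \<le> 1 / p \<and>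
           real (chromatic_number E U) > sqrt (real n * p)) \<le> p"
proof -
  define s where "s = sqrt (real n * p)"
  define h where "h = nat \<lfloor>s / 2\<rfloor>"
  have "64 \<le> s"
    unfolding s_def using np real_le_rsqrt[of 64 "real n * p"] by simp
  then have h: "2 * real h \<le> s" "s < 2 * real h + 2" "32 \<le> h"
    unfolding h_def by linarith+
  have np_le: "real n * p \<le> (2 * real h + 2) ^ 2"
  proof -
    have "real n * p = s ^ 2"
      using p by (simp add: s_def)
    also have "\<dots> \<le> (2 * real h + 2) ^ 2"
      using h \<open>64 \<le> s\<close> by (intro power_mono) auto
    finally show ?thesis .
  qed
  have "gnp_prob n p (\<lambda>E. \<exists>U\<subseteq>{1..n}. real (card U) \<le> 1 / p \<and>
           real (chromatic_number E U) > sqrt (real n * p))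
      \<le> gnp_prob n p (\<lambda>E. \<exists>U\<subseteq>{1..n}. real (card U) \<le> 1 / p \<and> 2 * h < chromatic_number E U)"
    using p h(1) by (intro gnp_prob_mono) (auto simp: s_def)
  also have "\<dots> \<le> (\<Sum>w\<in>{w. w \<le> n \<and> 1 \<le> w \<and> real w \<le> 1 / p}.
          real (n choose w) * (real ((w choose 2) choose (w * h)) * p ^ (w * h)))"
    using p by (intro gnp_prob_chromatic_gt_le_first_moment) auto
  also have "\<dots> \<le> (\<Sum>w\<in>{w. w \<le> n \<and> 1 \<le> w \<and> real w \<le> 1 / p}. p / 2 ^ w)"
    using p h(3) np_le
    by (intro sum_mono expected_dense_subgraphs_le) (auto simp: pos_le_divide_eq mult.commute)
  also have "\<dots> \<le> (\<Sum>w=1..n. p / 2 ^ w)"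
    using p by (intro sum_mono2) auto
  also have "\<dots> = p * (1 - 1 / 2 ^ n)"
    by (induction n) (auto simp: field_simps)
  also have "\<dots> \<le> p"
    using p by simp
  finally show ?thesis .
qed

theorem lemma12:
  shows "\<exists>C>0. \<forall>c0\<ge>C. \<forall>p :: nat \<Rightarrow> real.
    (\<forall>\<^sub>F n in sequentially. c0 / real n \<le> p n \<and> p n \<le> ln (real n) ^ 7 / real n) \<longrightarrow>
    ((\<lambda>n. gnp_prob n (p n)
        (\<lambda>E. \<exists>U \<subseteq> {1..n}. real (card U) \<le> 1 / p n \<and>
                 real (chromatic_number E U) > sqrt (real n * p n))) \<longlonglongrightarrow> 0)"
proof (intro exI[of _ 4096] conjI allI impI)
  fix c0 :: real and p :: "nat \<Rightarrow> real"
  assume "4096 \<le> c0"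
    and range: "\<forall>\<^sub>F n in sequentially. c0 / real n \<le> p n \<and> p n \<le> ln (real n) ^ 7 / real n"
  let ?bad = "\<lambda>n E. \<exists>U \<subseteq> {1..n}. real (card U) \<le> 1 / p n \<and>
                 real (chromatic_number E U) > sqrt (real n * p n)"
  have upper_tendsto: "(\<lambda>n. ln (real n) ^ 7 / real n) \<longlonglongrightarrow> 0"
    by real_asymp
  have "\<forall>\<^sub>F n in sequentially. 0 < p n \<and> p n \<le> 1 \<and> 4096 \<le> real n * p n"
    using range order_tendstoD(2)[OF upper_tendsto zero_less_one] eventually_gt_at_top[of 0]
  proof eventually_elim
    case (elim n)
    then have "c0 \<le> real n * p n"
      by (simp add: divide_le_eq mult.commute)
    moreover have "0 < c0 / real n"
      using \<open>4096 \<le> c0\<close> elim by simp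
    ultimately show ?case
      using \<open>4096 \<le> c0\<close> elim by linarith
  qed
  then have bounds: "\<forall>\<^sub>F n in sequentially.
      0 \<le> gnp_prob n (p n) (?bad n) \<and> gnp_prob n (p n) (?bad n) \<le> p n"
    by eventually_elim (intro conjI gnp_prob_nonneg gnp_prob_small_set_chromatic_gt_sqrt_le, auto)
  have "p \<longlonglongrightarrow> 0"
    by (rule tendsto_sandwich[OF _ _ tendsto_const upper_tendsto])
      (use range bounds in \<open>auto elim: eventually_mono\<close>)
  show "(\<lambda>n. gnp_prob n (p n) (?bad n)) \<longlonglongrightarrow> 0"
    by (rule tendsto_sandwich[OF _ _ tendsto_const \<open>p \<longlonglongrightarrow> 0\<close>])
      (use bounds in \<open>auto elim: eventually_mono\<close>)
qed simp

end
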